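(* There exists a universal constant $c>0$ such that the following holds. Let $k$ and $n$ be positive integers with $k>n$. For every $\mathbf{y}=y_1\ldots y_k\in\{0,1\}^k$, let $\rho(\mathbf{y})$ be an $n$-qubit density matrix. Suppose there exist Hermitian operators $O_1,\ldots,O_k$ on $n$ qubits, real numbers $\alpha_1,\ldots,\alpha_k$ and $\gamma>0$ such that for all $\mathbf{y}\in\{0,1\}^k$ and all $i\in\{1,\ldots,k\}$: (i) if $y_i=0$ then $\operatorname{Tr}[\rho(\mathbf{y})O_i]\le \alpha_i-\gamma$, and (ii) if $y_i=1$ then $\operatorname{Tr}[\rho(\mathbf{y})O_i]\ge \alpha_i+\gamma$. Let $\|O\|_\infty:=\max_i\|O_i\|_\infty$. Then $n\,\|O\|_\infty^2/\gamma^2\ \ge\ c\,k$, i.e. $n\|O\|_\infty^2/\gamma^2\in\Omega(k)$.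
   Context: $\|A\|_\infty$ denotes the spectral norm (largest absolute eigenvalue) of a Hermitian operator $A$. An $n$-qubit density matrix is a positive semidefinite, unit-trace operator on $(\mathbb{C}^2)^{\otimes n}$. *)

theory Defs
  imports "Jordan_Normal_Form.Matrix" "Jordan_Normal_Form.Char_Poly"
begin

definition hermitian_mat :: "nat \<Rightarrow> complex mat \<Rightarrow> bool" where
  "hermitian_mat d A \<longleftrightarrow> A \<in> carrier_mat d d \<and>
     (\<forall>i<d. \<forall>j<d. A $$ (i, j) = cnj (A $$ (j, i)))"

definition psd_mat :: "nat \<Rightarrow> complex mat \<Rightarrow> bool" where
  "psd_mat d A \<longleftrightarrow> hermitian_mat d A \<and>
     (\<forall>v \<in> carrier_vec d. Re (conjugate v \<bullet> (A *\<^sub>v v)) \<ge> 0)"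

definition mat_trace :: "complex mat \<Rightarrow> complex" where
  "mat_trace A = (\<Sum>i<dim_row A. A $$ (i, i))"

definition density_mat :: "nat \<Rightarrow> complex mat \<Rightarrow> bool" where
  "density_mat n \<rho> \<longleftrightarrow> psd_mat (2 ^ n) \<rho> \<and> mat_trace \<rho> = 1"

definition spec_norm :: "complex mat \<Rightarrow> real" where
  "spec_norm A = Max {cmod e | e. eigenvalue A e}"

end

theory Submission
  imports Defs "Jordan_Normal_Form.Spectral_Radius"
begin

text \<open>For a bit string \<open>y\<close> let \<open>S\<^sub>y = \<Sum>\<^sub>i (-1)\<^bsup>1 - y\<^sub>i\<^esup> O\<^sub>i\<close>. Comparing \<open>\<rho>(y)\<close> with the state of the
  complementary string shows \<open>|tr(\<rho> S\<^sub>y)| \<ge> k\<gamma>\<close> for one of the two states, and repeated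
  Cauchy--Schwarz in that state gives \<open>tr(S\<^sub>y\<^bsup>2p\<^esup>) \<ge> (k\<gamma>)\<^bsup>2p\<^esup>\<close> whenever \<open>p\<close> is a power of two.
  Averaging over all \<open>y\<close>, only the words in the \<open>O\<^sub>i\<close> in which every letter occurs an even
  number of times survive in the expansion of \<open>tr(S\<^sub>y\<^bsup>2p\<^esup>)\<close>; there are at most \<open>k\<^sup>p (2p)\<^sup>p\<close> of
  them and each has trace at most \<open>2\<^sup>n \<parallel>O\<parallel>\<^bsup>2p\<^esup>\<close>. Hence \<open>(k\<gamma>)\<^bsup>2p\<^esup> \<le> 2\<^sup>n \<parallel>O\<parallel>\<^bsup>2p\<^esup> k\<^sup>p (2p)\<^sup>p\<close>, and
  choosing \<open>p \<le> n < 2p\<close> yields \<open>k \<gamma>\<^sup>2 \<le> 8 n \<parallel>O\<parallel>\<^sup>2\<close>.\<close>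

lemma Cauchy_Schwarz_sum:
  fixes f g :: "'a \<Rightarrow> real"
  shows "(\<Sum>i\<in>I. f i * g i)\<^sup>2 \<le> (\<Sum>i\<in>I. (f i)\<^sup>2) * (\<Sum>i\<in>I. (g i)\<^sup>2)"
proof -
  have swap: "(\<Sum>i\<in>I. \<Sum>j\<in>I. (f j)\<^sup>2 * (g i)\<^sup>2) = (\<Sum>i\<in>I. (f i)\<^sup>2) * (\<Sum>i\<in>I. (g i)\<^sup>2)"
    by (subst sum.swap) (simp add: sum_product)
  have "0 \<le> (\<Sum>i\<in>I. \<Sum>j\<in>I. (f i * g j - f j * g i)\<^sup>2)"
    by (intro sum_nonneg) auto
  also have "\<dots> = (\<Sum>i\<in>I. \<Sum>j\<in>I. (f i)\<^sup>2 * (g j)\<^sup>2 + (f j)\<^sup>2 * (g i)\<^sup>2 - 2 * ((f i * g i) * (f j * g j)))"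
    by (intro sum.cong refl) (simp add: power2_eq_square algebra_simps)
  also have "\<dots> = 2 * ((\<Sum>i\<in>I. (f i)\<^sup>2) * (\<Sum>i\<in>I. (g i)\<^sup>2)) - 2 * (\<Sum>i\<in>I. f i * g i)\<^sup>2"
    by (simp only: sum.distrib sum_subtractf swap sum_distrib_left[symmetric])
       (simp add: sum_product sum_distrib_right[symmetric] power2_eq_square)
  finally show ?thesis by simp
qed

lemma sum_sq_le_mult_sums:
  fixes u a b :: "'a \<Rightarrow> real"
  assumes "\<And>i. i \<in> I \<Longrightarrow> 0 \<le> a i" "\<And>i. i \<in> I \<Longrightarrow> 0 \<le> b i" "\<And>i. i \<in> I \<Longrightarrow> 0 \<le> u i"
    and "\<And>i. i \<in> I \<Longrightarrow> (u i)\<^sup>2 \<le> a i * b i"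
  shows "(\<Sum>i\<in>I. u i)\<^sup>2 \<le> (\<Sum>i\<in>I. a i) * (\<Sum>i\<in>I. b i)"
proof -
  have "u i \<le> sqrt (a i) * sqrt (b i)" if "i \<in> I" for i
    using assms[OF that] by (metis real_le_rsqrt real_sqrt_mult)
  then have "(\<Sum>i\<in>I. u i) \<le> (\<Sum>i\<in>I. sqrt (a i) * sqrt (b i))"
    by (rule sum_mono)
  then have "(\<Sum>i\<in>I. u i)\<^sup>2 \<le> (\<Sum>i\<in>I. sqrt (a i) * sqrt (b i))\<^sup>2"
    using assms(3) by (simp add: power_mono sum_nonneg)
  also have "\<dots> \<le> (\<Sum>i\<in>I. (sqrt (a i))\<^sup>2) * (\<Sum>i\<in>I. (sqrt (b i))\<^sup>2)"
    by (rule Cauchy_Schwarz_sum)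
  also have "\<dots> = (\<Sum>i\<in>I. a i) * (\<Sum>i\<in>I. b i)"
    using assms by (simp cong: sum.cong)
  finally show ?thesis .
qed

lemma le_of_quadratic_nonneg:
  fixes a b c :: real
  assumes quad: "\<And>t. 0 \<le> a - 2 * t * b + t\<^sup>2 * b * c" and "0 \<le> b" "0 \<le> c"
  shows "b \<le> a * c"
proof (cases "c = 0")
  case True
  have "b = 0"
  proof (rule ccontr)
    assume "b \<noteq> 0"
    then have "0 \<le> a - 2 * ((a + 1) / (2 * b)) * b"
      using quad[of "(a + 1) / (2 * b)"] True by simp
    also have "\<dots> = -1" using \<open>b \<noteq> 0\<close> by (simp add: field_simps)
    finally show False by simp
  qed
  then show ?thesis using True by simp
next
  case False
  then have "0 < c" using \<open>0 \<le> c\<close> by simp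
  have "0 \<le> a - 2 * (1 / c) * b + (1 / c)\<^sup>2 * b * c" by (rule quad)
  also have "\<dots> = a - b / c" using \<open>0 < c\<close> by (simp add: field_simps power2_eq_square)
  finally show ?thesis using \<open>0 < c\<close> by (simp add: field_simps)
qed

lemma le_sq_mult_of_forall_gt:
  fixes a b M :: real
  assumes le: "\<And>M'. M < M' \<Longrightarrow> a \<le> M'\<^sup>2 * b" and "0 \<le> M" "0 \<le> b"
  shows "a \<le> M\<^sup>2 * b"
proof (rule field_le_epsilon)
  fix e :: real
  assume "0 < e"
  show "a \<le> M\<^sup>2 * b + e"
  proof (cases "b = 0")
    case True
    then show ?thesis using le[of "M + 1"] \<open>0 < e\<close> by simp
  next
    case False
    then have "0 < b" using \<open>0 \<le> b\<close> by simp
    define M' where "M' = sqrt (M\<^sup>2 + e / b)"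
    have "M < M'"
      unfolding M'_def using \<open>0 < e\<close> \<open>0 < b\<close> by (intro real_less_rsqrt) simp
    then have "a \<le> M'\<^sup>2 * b" by (rule le)
    also have "M'\<^sup>2 * b = M\<^sup>2 * b + e"
      unfolding M'_def using \<open>0 < e\<close> \<open>0 < b\<close> by (simp add: field_simps add_pos_nonneg)
    finally show ?thesis .
  qed
qed

section \<open>Hermitian and density matrices\<close>

lemma index_mult_mat_square:
  assumes "A \<in> carrier_mat d d" "B \<in> carrier_mat d d" "i < d" "j < d"
  shows "(A * B) $$ (i, j) = (\<Sum>l<d. A $$ (i, l) * B $$ (l, j))"
  using assms by (auto simp: scalar_prod_def atLeast0LessThan intro!: sum.cong)

lemma mat_trace_mult:
  assumes "A \<in> carrier_mat d d" "B \<in> carrier_mat d d"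
  shows "mat_trace (A * B) = (\<Sum>i<d. \<Sum>l<d. A $$ (i, l) * B $$ (l, i))"
proof -
  have "mat_trace (A * B) = (\<Sum>i<d. (A * B) $$ (i, i))"
    using assms unfolding mat_trace_def by simp
  then show ?thesis by (simp add: index_mult_mat_square[OF assms])
qed

lemma pow_mat_add:
  assumes "A \<in> carrier_mat d d"
  shows "A ^\<^sub>m (a + b) = A ^\<^sub>m a * A ^\<^sub>m b"
proof (induction b)
  case 0
  then show ?case using assms by simp
next
  case (Suc b)
  then show ?case using assms by (simp add: assoc_mult_mat[of _ d d _ d _ d])
qed

lemma pow_mat_double:
  assumes "A \<in> carrier_mat d d"
  shows "A ^\<^sub>m (2 * m) = A ^\<^sub>m m * A ^\<^sub>m m"
  using pow_mat_add[OF assms, of m m] by (simp add: mult_2)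

lemma hermitian_mat_carrier: "hermitian_mat d A \<Longrightarrow> A \<in> carrier_mat d d"
  unfolding hermitian_mat_def by blast

lemma hermitian_mat_cnj:
  assumes "hermitian_mat d A" "i < d" "j < d"
  shows "cnj (A $$ (i, j)) = A $$ (j, i)"
  using assms unfolding hermitian_mat_def by (metis complex_cnj_cnj)

lemma psd_mat_hermitian: "psd_mat d R \<Longrightarrow> hermitian_mat d R"
  unfolding psd_mat_def by blast

lemma psd_mat_carrier: "psd_mat d R \<Longrightarrow> R \<in> carrier_mat d d"
  by (rule hermitian_mat_carrier[OF psd_mat_hermitian])

lemma hermitian_mat_pow:
  assumes A: "hermitian_mat d A"
  shows "hermitian_mat d (A ^\<^sub>m k)"
proof (induction k)
  case 0
  then show ?case using A unfolding hermitian_mat_def by auto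
next
  case (Suc k)
  have Ac: "A \<in> carrier_mat d d" by (rule hermitian_mat_carrier[OF A])
  have Akc: "A ^\<^sub>m k \<in> carrier_mat d d" using Ac by simp
  have commute: "A ^\<^sub>m k * A = A * A ^\<^sub>m k"
    using pow_mat_add[OF Ac, of k 1] pow_mat_add[OF Ac, of 1 k] Ac by simp
  show ?case unfolding hermitian_mat_def
  proof (intro conjI allI impI)
    show "A ^\<^sub>m Suc k \<in> carrier_mat d d" by (rule pow_carrier_mat[OF Ac])
    fix i j
    assume ij: "i < d" "j < d"
    have "(A ^\<^sub>m Suc k) $$ (i, j) = (\<Sum>l<d. (A ^\<^sub>m k) $$ (i, l) * A $$ (l, j))"
      using index_mult_mat_square[OF Akc Ac ij] by simp
    also have "\<dots> = cnj (\<Sum>l<d. A $$ (j, l) * (A ^\<^sub>m k) $$ (l, i))"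
      unfolding cnj_sum using ij Suc
      by (intro sum.cong refl) (simp add: hermitian_mat_cnj[OF A] hermitian_mat_cnj[of d "A ^\<^sub>m k"] mult.commute)
    also have "\<dots> = cnj ((A ^\<^sub>m Suc k) $$ (j, i))"
      using index_mult_mat_square[OF Ac Akc ij(2,1)] commute by simp
    finally show "(A ^\<^sub>m Suc k) $$ (i, j) = cnj ((A ^\<^sub>m Suc k) $$ (j, i))" .
  qed
qed

text \<open>Vectors are represented by functions \<open>nat \<Rightarrow> complex\<close>, of which only the values below the
  dimension \<open>d\<close> matter; \<open>sesq d R\<close> is the sesquilinear form \<open>\<langle>x, R y\<rangle>\<close>.\<close>

definition sesq :: "nat \<Rightarrow> complex mat \<Rightarrow> (nat \<Rightarrow> complex) \<Rightarrow> (nat \<Rightarrow> complex) \<Rightarrow> complex" where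
  "sesq d R x y = (\<Sum>i<d. \<Sum>j<d. cnj (x i) * R $$ (i, j) * y j)"

definition basis_fn :: "nat \<Rightarrow> nat \<Rightarrow> complex" where
  "basis_fn i = (\<lambda>a. if a = i then 1 else 0)"

lemma sesq_add_smult:
  "sesq d R (\<lambda>i. x i + c * y i) (\<lambda>i. x i + c * y i) =
   sesq d R x x + c * sesq d R x y + cnj c * sesq d R y x + cnj c * c * sesq d R y y"
  by (simp add: sesq_def algebra_simps sum.distrib sum_distrib_left)

lemma sesq_swap:
  assumes "hermitian_mat d R"
  shows "sesq d R x y = cnj (sesq d R y x)"
proof -
  have "cnj (sesq d R y x) = (\<Sum>i<d. \<Sum>j<d. y i * R $$ (j, i) * cnj (x j))"
    unfolding sesq_def cnj_sum by (intro sum.cong refl) (simp add: hermitian_mat_cnj[OF assms])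
  also have "\<dots> = sesq d R x y"
    unfolding sesq_def by (subst sum.swap) (simp add: algebra_simps)
  finally show ?thesis by simp
qed

lemma psd_mat_sesq_nonneg:
  assumes "psd_mat d R"
  shows "0 \<le> Re (sesq d R x x)"
proof -
  let ?v = "vec d x"
  have "0 \<le> Re (conjugate ?v \<bullet> (R *\<^sub>v ?v))"
    using assms unfolding psd_mat_def by auto
  also have "conjugate ?v \<bullet> (R *\<^sub>v ?v) = sesq d R x x"
    using psd_mat_carrier[OF assms] unfolding sesq_def
    by (auto simp: scalar_prod_def atLeast0LessThan sum_distrib_left algebra_simps intro!: sum.cong)
  finally show ?thesis .
qed

lemma sesq_Cauchy_Schwarz:
  assumes R: "hermitian_mat d R" and nonneg: "\<And>z. 0 \<le> Re (sesq d R z z)"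
  shows "(cmod (sesq d R x y))\<^sup>2 \<le> Re (sesq d R x x) * Re (sesq d R y y)"
proof (rule le_of_quadratic_nonneg)
  define z where "z = sesq d R x y"
  have zz: "z * cnj z = of_real ((cmod z)\<^sup>2)" by (rule complex_norm_square[symmetric])
  fix t :: real
  define c where "c = - of_real t * cnj z"
  have cz: "c * z = - of_real (t * (cmod z)\<^sup>2)"
    unfolding c_def of_real_mult zz[symmetric] by (simp add: algebra_simps)
  have cc: "cnj c * c = of_real (t\<^sup>2 * (cmod z)\<^sup>2)"
    unfolding c_def of_real_mult zz[symmetric] by (simp add: algebra_simps power2_eq_square)
  have "0 \<le> Re (sesq d R (\<lambda>i. x i + c * y i) (\<lambda>i. x i + c * y i))" by (rule nonneg)
  also have "\<dots> = Re (sesq d R x x + c * z + cnj (c * z) + cnj c * c * sesq d R y y)"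
    unfolding sesq_add_smult z_def sesq_swap[OF R, of y x] by simp
  also have "\<dots> = Re (sesq d R x x) - 2 * t * (cmod z)\<^sup>2 + t\<^sup>2 * (cmod z)\<^sup>2 * Re (sesq d R y y)"
    unfolding cz cc by simp
  finally show "0 \<le> Re (sesq d R x x) - 2 * t * (cmod (sesq d R x y))\<^sup>2
      + t\<^sup>2 * (cmod (sesq d R x y))\<^sup>2 * Re (sesq d R y y)"
    unfolding z_def .
qed (use nonneg in auto)

lemma sesq_basis_left:
  assumes "i < d"
  shows "sesq d R (basis_fn i) y = (\<Sum>j<d. R $$ (i, j) * y j)"
proof -
  have "sesq d R (basis_fn i) y = (\<Sum>a<d. if a = i then (\<Sum>j<d. R $$ (i, j) * y j) else 0)"
    unfolding sesq_def basis_fn_def by (intro sum.cong refl) auto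
  then show ?thesis using assms by simp
qed

lemma sesq_basis_basis:
  assumes "i < d" "j < d"
  shows "sesq d R (basis_fn i) (basis_fn j) = R $$ (i, j)"
proof -
  have "sesq d R (basis_fn i) (basis_fn j) = (\<Sum>l<d. if l = j then R $$ (i, l) else 0)"
    unfolding sesq_basis_left[OF assms(1)] by (intro sum.cong refl) (simp add: basis_fn_def)
  then show ?thesis using assms by simp
qed

lemma psd_diag_nonneg:
  assumes "psd_mat d R" "i < d"
  shows "0 \<le> Re (R $$ (i, i))"
  using psd_mat_sesq_nonneg[OF assms(1), of "basis_fn i"] sesq_basis_basis[OF assms(2,2)] by simp

lemma psd_entry_sq_le:
  assumes "psd_mat d R" "i < d" "j < d"
  shows "(cmod (R $$ (i, j)))\<^sup>2 \<le> Re (R $$ (i, i)) * Re (R $$ (j, j))"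
  using sesq_Cauchy_Schwarz[OF psd_mat_hermitian[OF assms(1)] psd_mat_sesq_nonneg[OF assms(1)],
      of "basis_fn i" "basis_fn j"]
  by (simp add: sesq_basis_basis assms)

lemma density_diag_sum:
  assumes "psd_mat d R" "mat_trace R = 1"
  shows "(\<Sum>i<d. Re (R $$ (i, i))) = 1"
  using assms psd_mat_carrier[OF assms(1)] unfolding mat_trace_def by (simp flip: Re_sum)

text \<open>Cauchy--Schwarz for \<open>\<langle>x, R y\<rangle>\<close>, applied to the unit vectors and the columns of \<open>X\<close>.\<close>

lemma density_cmod_trace_sq_le:
  assumes R: "psd_mat d R" "mat_trace R = 1" and X: "hermitian_mat d X"
  shows "(cmod (mat_trace (R * X)))\<^sup>2 \<le> Re (mat_trace (R * (X * X)))"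
proof -
  have Rc: "R \<in> carrier_mat d d" by (rule psd_mat_carrier[OF R(1)])
  have Xc: "X \<in> carrier_mat d d" by (rule hermitian_mat_carrier[OF X])
  define col where "col i = (\<lambda>b. X $$ (b, i))" for i
  define z where "z i = sesq d R (basis_fn i) (col i)" for i
  have tr: "mat_trace (R * X) = (\<Sum>i<d. z i)"
    unfolding mat_trace_mult[OF Rc Xc] z_def col_def by (simp add: sesq_basis_left)
  have z_sq: "(cmod (z i))\<^sup>2 \<le> Re (R $$ (i, i)) * Re (sesq d R (col i) (col i))" if "i < d" for i
    using sesq_Cauchy_Schwarz[OF psd_mat_hermitian[OF R(1)] psd_mat_sesq_nonneg[OF R(1)],
        of "basis_fn i" "col i"] that
    by (simp add: z_def sesq_basis_basis)
  have "(cmod (mat_trace (R * X)))\<^sup>2 \<le> (\<Sum>i<d. cmod (z i))\<^sup>2"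
    unfolding tr by (simp add: power_mono norm_sum)
  also have "\<dots> \<le> (\<Sum>i<d. Re (R $$ (i, i))) * (\<Sum>i<d. Re (sesq d R (col i) (col i)))"
    by (rule sum_sq_le_mult_sums)
      (auto simp: psd_diag_nonneg[OF R(1)] psd_mat_sesq_nonneg[OF R(1)] z_sq)
  also have "\<dots> = Re (\<Sum>i<d. sesq d R (col i) (col i))"
    using density_diag_sum[OF R] by (simp add: Re_sum)
  also have "(\<Sum>i<d. sesq d R (col i) (col i)) = (\<Sum>i<d. \<Sum>a<d. \<Sum>b<d. X $$ (i, a) * R $$ (a, b) * X $$ (b, i))"
    unfolding sesq_def col_def by (simp add: hermitian_mat_cnj[OF X])
  also have "\<dots> = (\<Sum>a<d. \<Sum>b<d. \<Sum>i<d. X $$ (i, a) * R $$ (a, b) * X $$ (b, i))"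
    by (subst sum.swap) (rule sum.cong[OF refl], rule sum.swap)
  also have "\<dots> = mat_trace (R * (X * X))"
    unfolding mat_trace_mult[OF Rc mult_carrier_mat[OF Xc Xc]]
    by (intro sum.cong refl) (simp add: index_mult_mat_square[OF Xc Xc] sum_distrib_left algebra_simps)
  finally show ?thesis .
qed

lemma density_cmod_trace_sq_le_frobenius:
  assumes R: "psd_mat d R" "mat_trace R = 1" and P: "P \<in> carrier_mat d d"
  shows "(cmod (mat_trace (R * P)))\<^sup>2 \<le> (\<Sum>i<d. \<Sum>j<d. (cmod (P $$ (i, j)))\<^sup>2)"
proof -
  have Rc: "R \<in> carrier_mat d d" by (rule psd_mat_carrier[OF R(1)])
  let ?I = "{..<d} \<times> {..<d}"
  have "(cmod (mat_trace (R * P)))\<^sup>2 \<le> (\<Sum>(i, j)\<in>?I. cmod (R $$ (i, j)) * cmod (P $$ (j, i)))\<^sup>2"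
  proof -
    have "cmod (mat_trace (R * P)) \<le> (\<Sum>(i, j)\<in>?I. cmod (R $$ (i, j)) * cmod (P $$ (j, i)))"
      unfolding mat_trace_mult[OF Rc P] sum.cartesian_product
      by (rule order.trans[OF norm_sum]) (simp add: case_prod_unfold norm_mult)
    then show ?thesis by (simp add: power_mono)
  qed
  also have "\<dots> \<le> (\<Sum>(i, j)\<in>?I. Re (R $$ (i, i)) * Re (R $$ (j, j))) * (\<Sum>(i, j)\<in>?I. (cmod (P $$ (j, i)))\<^sup>2)"
  proof (rule sum_sq_le_mult_sums; clarify)
    fix i j
    assume "i < d" "j < d"
    then show "0 \<le> Re (R $$ (i, i)) * Re (R $$ (j, j))"
      by (simp add: psd_diag_nonneg[OF R(1)])
    have "(cmod (R $$ (i, j)))\<^sup>2 * (cmod (P $$ (j, i)))\<^sup>2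
        \<le> (Re (R $$ (i, i)) * Re (R $$ (j, j))) * (cmod (P $$ (j, i)))\<^sup>2"
      by (intro mult_right_mono psd_entry_sq_le[OF R(1)]) (simp_all add: \<open>i < d\<close> \<open>j < d\<close>)
    then show "(cmod (R $$ (i, j)) * cmod (P $$ (j, i)))\<^sup>2
        \<le> Re (R $$ (i, i)) * Re (R $$ (j, j)) * (cmod (P $$ (j, i)))\<^sup>2"
      by (simp add: power_mult_distrib)
  qed auto
  also have "(\<Sum>(i, j)\<in>?I. Re (R $$ (i, i)) * Re (R $$ (j, j))) = 1"
    using density_diag_sum[OF R] by (simp add: sum.cartesian_product[symmetric] sum_product[symmetric])
  also have "(\<Sum>(i, j)\<in>?I. (cmod (P $$ (j, i)))\<^sup>2) = (\<Sum>i<d. \<Sum>j<d. (cmod (P $$ (i, j)))\<^sup>2)"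
    by (simp add: sum.cartesian_product[symmetric]) (rule sum.swap)
  finally show ?thesis by simp
qed

lemma hermitian_frobenius_eq_trace_square:
  assumes P: "hermitian_mat d P"
  shows "(\<Sum>i<d. \<Sum>j<d. (cmod (P $$ (i, j)))\<^sup>2) = Re (mat_trace (P * P))"
proof -
  have Pc: "P \<in> carrier_mat d d" by (rule hermitian_mat_carrier[OF P])
  have "P $$ (i, j) * P $$ (j, i) = of_real ((cmod (P $$ (i, j)))\<^sup>2)" if "i < d" "j < d" for i j
    using hermitian_mat_cnj[OF P that] complex_norm_square by metis
  then have "mat_trace (P * P) = (\<Sum>i<d. \<Sum>j<d. of_real ((cmod (P $$ (i, j)))\<^sup>2))"
    unfolding mat_trace_mult[OF Pc Pc] by simp
  then show ?thesis by (simp add: Re_sum)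
qed

text \<open>Repeated squaring: \<open>|tr(R T)|\<^sup>2 \<le> tr(R T\<^sup>2)\<close> for \<open>T = S ^ 2 ^ i\<close>, and finally
  \<open>|tr(R T)|\<^sup>2 \<le> tr(T\<^sup>2)\<close>.\<close>

lemma trace_pow_ge_of_density_trace:
  assumes R: "psd_mat d R" "mat_trace R = 1" and S: "hermitian_mat d S"
    and t: "0 \<le> t" "t \<le> cmod (mat_trace (R * S))"
  shows "t ^ (2 ^ Suc j) \<le> Re (mat_trace (S ^\<^sub>m (2 ^ Suc j)))"
proof -
  have Sc: "S \<in> carrier_mat d d" by (rule hermitian_mat_carrier[OF S])
  define T where "T i = S ^\<^sub>m (2 ^ i)" for i
  have T_herm: "hermitian_mat d (T i)" for i unfolding T_def by (rule hermitian_mat_pow[OF S])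
  have T_Suc: "T (Suc i) = T i * T i" for i
    unfolding T_def using pow_mat_double[OF Sc, of "2 ^ i"] by simp
  have sq: "(t ^ (2 ^ i))\<^sup>2 = t ^ (2 ^ Suc i)" for i
    by (simp add: power_mult[symmetric] mult.commute)
  have iter: "t ^ (2 ^ i) \<le> cmod (mat_trace (R * T i))" for i
  proof (induction i)
    case 0
    then show ?case using t Sc by (simp add: T_def)
  next
    case (Suc i)
    have "t ^ (2 ^ Suc i) \<le> (cmod (mat_trace (R * T i)))\<^sup>2"
      unfolding sq[symmetric] using Suc t by (simp add: power_mono)
    also have "\<dots> \<le> Re (mat_trace (R * T (Suc i)))"
      unfolding T_Suc by (rule density_cmod_trace_sq_le[OF R T_herm])
    also have "\<dots> \<le> cmod (mat_trace (R * T (Suc i)))" by (rule complex_Re_le_cmod)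
    finally show ?case .
  qed
  have "t ^ (2 ^ Suc j) \<le> (cmod (mat_trace (R * T j)))\<^sup>2"
    unfolding sq[symmetric] using iter[of j] t by (simp add: power_mono)
  also have "\<dots> \<le> Re (mat_trace (T (Suc j)))"
    unfolding T_Suc hermitian_frobenius_eq_trace_square[OF T_herm, symmetric]
    by (rule density_cmod_trace_sq_le_frobenius[OF R hermitian_mat_carrier[OF T_herm]])
  finally show ?thesis unfolding T_def .
qed

section \<open>Norm bound for Hermitian matrices\<close>

definition norm2 :: "nat \<Rightarrow> (nat \<Rightarrow> complex) \<Rightarrow> real" where
  "norm2 d x = (\<Sum>i<d. (cmod (x i))\<^sup>2)"

definition mat_app :: "nat \<Rightarrow> complex mat \<Rightarrow> (nat \<Rightarrow> complex) \<Rightarrow> nat \<Rightarrow> complex" where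
  "mat_app d A x = (\<lambda>i. \<Sum>j<d. A $$ (i, j) * x j)"

lemma norm2_nonneg: "0 \<le> norm2 d x"
  unfolding norm2_def by (simp add: sum_nonneg)

lemma norm2_cong: "(\<And>i. i < d \<Longrightarrow> x i = y i) \<Longrightarrow> norm2 d x = norm2 d y"
  unfolding norm2_def by (intro sum.cong) auto

lemma norm2_scale: "norm2 d (\<lambda>i. of_real r * x i) = r\<^sup>2 * norm2 d x"
  unfolding norm2_def by (simp add: sum_distrib_left norm_mult power_mult_distrib)

lemma norm2_eq_0_iff: "norm2 d x = 0 \<longleftrightarrow> (\<forall>i<d. x i = 0)"
  unfolding norm2_def by (auto simp: sum_nonneg_eq_0_iff)

lemma norm2_basis_fn: "i < d \<Longrightarrow> norm2 d (basis_fn i) = 1"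
  unfolding norm2_def basis_fn_def by (simp add: if_distrib[of "\<lambda>z. (cmod z)\<^sup>2"] cong: if_cong)

lemma mat_app_scale: "mat_app d A (\<lambda>i. of_real r * x i) = (\<lambda>i. of_real r * mat_app d A x i)"
  unfolding mat_app_def by (simp add: sum_distrib_left algebra_simps)

lemma mat_app_mult:
  assumes "A \<in> carrier_mat d d" "B \<in> carrier_mat d d" "i < d"
  shows "mat_app d (A * B) x i = mat_app d A (mat_app d B x) i"
proof -
  have "mat_app d (A * B) x i = (\<Sum>j<d. (\<Sum>l<d. A $$ (i, l) * B $$ (l, j)) * x j)"
    unfolding mat_app_def by (intro sum.cong refl) (simp add: index_mult_mat_square[OF assms])
  also have "\<dots> = (\<Sum>j<d. \<Sum>l<d. A $$ (i, l) * (B $$ (l, j) * x j))"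
    by (simp add: sum_distrib_right mult.assoc)
  also have "\<dots> = mat_app d A (mat_app d B x) i"
    unfolding mat_app_def by (subst sum.swap) (simp add: sum_distrib_left)
  finally show ?thesis .
qed

lemma sesq_one: "sesq d (1\<^sub>m d) x y = (\<Sum>i<d. cnj (x i) * y i)"
proof -
  have "sesq d (1\<^sub>m d) x y = (\<Sum>i<d. \<Sum>j<d. if j = i then cnj (x i) * y j else 0)"
    unfolding sesq_def by (intro sum.cong refl) auto
  then show ?thesis by simp
qed

lemma norm2_eq_sesq_one: "norm2 d x = Re (sesq d (1\<^sub>m d) x x)"
  unfolding norm2_def sesq_one Re_sum
  by (intro sum.cong refl) (simp add: complex_norm_square[symmetric] mult.commute)

lemma sesq_one_Cauchy_Schwarz: "(cmod (sesq d (1\<^sub>m d) x y))\<^sup>2 \<le> norm2 d x * norm2 d y"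
proof -
  have "hermitian_mat d (1\<^sub>m d)" unfolding hermitian_mat_def by auto
  then show ?thesis
    unfolding norm2_eq_sesq_one
    by (rule sesq_Cauchy_Schwarz) (simp add: norm2_eq_sesq_one[symmetric] norm2_nonneg)
qed

lemma sesq_one_mat_app_mat_app:
  assumes Y: "hermitian_mat d Y"
  shows "sesq d (1\<^sub>m d) (mat_app d Y x) (mat_app d Y x) = sesq d (1\<^sub>m d) x (mat_app d (Y * Y) x)"
proof -
  have Yc: "Y \<in> carrier_mat d d" by (rule hermitian_mat_carrier[OF Y])
  define u where "u = mat_app d Y x"
  have "sesq d (1\<^sub>m d) (mat_app d Y x) u = (\<Sum>j<d. \<Sum>i<d. cnj (x i) * Y $$ (i, j) * u j)"
    unfolding sesq_one mat_app_def
    by (simp add: cnj_sum sum_distrib_right sum_distrib_left hermitian_mat_cnj[OF Y] algebra_simps)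
  also have "\<dots> = (\<Sum>i<d. cnj (x i) * mat_app d Y u i)"
    unfolding mat_app_def by (subst sum.swap) (simp add: sum_distrib_left algebra_simps)
  also have "\<dots> = sesq d (1\<^sub>m d) x (mat_app d (Y * Y) x)"
    unfolding sesq_one u_def by (intro sum.cong refl) (simp add: mat_app_mult[OF Yc Yc])
  finally show ?thesis unfolding u_def .
qed

text \<open>For a unit vector, \<open>\<parallel>H x\<parallel>\<^sup>2 = \<langle>x, H\<^sup>2 x\<rangle> \<le> \<parallel>H\<^sup>2 x\<parallel>\<close>; iterating gives the bound below.\<close>

lemma norm2_mat_app_pow_le:
  assumes H: "hermitian_mat d H" and x: "norm2 d x = 1"
  shows "norm2 d (mat_app d H x) ^ (2 ^ j) \<le> norm2 d (mat_app d (H ^\<^sub>m (2 ^ j)) x)"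
proof (induction j)
  case 0
  then show ?case using hermitian_mat_carrier[OF H] by simp
next
  case (Suc j)
  have Hc: "H \<in> carrier_mat d d" by (rule hermitian_mat_carrier[OF H])
  define Y where "Y = H ^\<^sub>m (2 ^ j)"
  have Y: "hermitian_mat d Y" unfolding Y_def by (rule hermitian_mat_pow[OF H])
  have YY: "Y * Y = H ^\<^sub>m (2 ^ Suc j)"
    unfolding Y_def using pow_mat_double[OF Hc, of "2 ^ j"] by simp
  have "norm2 d (mat_app d H x) ^ (2 ^ Suc j) = (norm2 d (mat_app d H x) ^ (2 ^ j))\<^sup>2"
    by (simp add: power_mult[symmetric] mult.commute)
  also have "\<dots> \<le> (norm2 d (mat_app d Y x))\<^sup>2"
    using Suc by (simp add: power_mono norm2_nonneg Y_def)
  also have "\<dots> = (Re (sesq d (1\<^sub>m d) x (mat_app d (Y * Y) x)))\<^sup>2"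
    unfolding norm2_eq_sesq_one sesq_one_mat_app_mat_app[OF Y] ..
  also have "\<dots> \<le> (cmod (sesq d (1\<^sub>m d) x (mat_app d (Y * Y) x)))\<^sup>2"
    using abs_Re_le_cmod by (metis abs_ge_zero power2_abs power_mono)
  also have "\<dots> \<le> norm2 d x * norm2 d (mat_app d (Y * Y) x)" by (rule sesq_one_Cauchy_Schwarz)
  finally show ?case using x YY by simp
qed

lemma norm2_mat_app_le_of_entry_bound:
  assumes "\<And>i j. i < d \<Longrightarrow> j < d \<Longrightarrow> cmod (Y $$ (i, j)) \<le> c"
  shows "norm2 d (mat_app d Y x) \<le> d * (d * c\<^sup>2) * norm2 d x"
proof -
  have row: "(cmod (mat_app d Y x i))\<^sup>2 \<le> d * c\<^sup>2 * norm2 d x" if i: "i < d" for i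
  proof -
    have "cmod (mat_app d Y x i) \<le> (\<Sum>j<d. cmod (Y $$ (i, j)) * cmod (x j))"
      unfolding mat_app_def by (rule order.trans[OF norm_sum]) (simp add: norm_mult)
    then have "(cmod (mat_app d Y x i))\<^sup>2 \<le> (\<Sum>j<d. cmod (Y $$ (i, j)) * cmod (x j))\<^sup>2"
      by (simp add: power_mono)
    also have "\<dots> \<le> (\<Sum>j<d. (cmod (Y $$ (i, j)))\<^sup>2) * norm2 d x"
      unfolding norm2_def by (rule Cauchy_Schwarz_sum)
    also have "\<dots> \<le> (\<Sum>j<d. c\<^sup>2) * norm2 d x"
      using assms[OF i] by (intro mult_right_mono sum_mono power_mono norm2_nonneg) auto
    finally show ?thesis by simp
  qed
  have "norm2 d (mat_app d Y x) \<le> (\<Sum>i<d. d * c\<^sup>2 * norm2 d x)"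
    unfolding norm2_def[of d "mat_app d Y x"] using row by (intro sum_mono) auto
  then show ?thesis by simp
qed

lemma spec_norm_eq_spectral_radius: "spec_norm A = spectral_radius A"
  unfolding spec_norm_def spectral_radius_def spectrum_def by (simp add: setcompr_eq_image)

lemma eigenvalue_smult:
  fixes A :: "complex mat"
  assumes A: "A \<in> carrier_mat d d" and "c \<noteq> 0" and "eigenvalue (c \<cdot>\<^sub>m A) e"
  shows "eigenvalue A (e / c)"
proof -
  obtain v where v: "v \<in> carrier_vec d" "v \<noteq> 0\<^sub>v d" "(c \<cdot>\<^sub>m A) *\<^sub>v v = e \<cdot>\<^sub>v v"
    using assms(3) A unfolding eigenvalue_def eigenvector_def by auto
  have "A *\<^sub>v v = (e / c) \<cdot>\<^sub>v v"
  proof (rule eq_vecI)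
    fix i
    assume "i < dim_vec ((e / c) \<cdot>\<^sub>v v)"
    then have i: "i < d" using v by simp
    have "(A *\<^sub>v v) $ i = c * (A *\<^sub>v v) $ i / c"
      using \<open>c \<noteq> 0\<close> by simp
    also have "c * (A *\<^sub>v v) $ i = e * v $ i"
      using arg_cong[OF v(3), of "\<lambda>w. w $ i"] i A v(1)
      by (simp add: scalar_prod_def sum_distrib_left algebra_simps)
    finally have "(A *\<^sub>v v) $ i = e * v $ i / c" .
    then show "(A *\<^sub>v v) $ i = ((e / c) \<cdot>\<^sub>v v) $ i"
      using i v by simp
  qed (use v A in auto)
  then show ?thesis unfolding eigenvalue_def eigenvector_def using v A by auto
qed

text \<open>The powers of \<open>H\<close> stay bounded, whereas \<open>\<parallel>H x\<parallel>\<^sup>2 > 1\<close> would make the left-hand side of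
  the previous lemma grow doubly exponentially.\<close>

lemma norm2_mat_app_unit_le_1:
  assumes H: "hermitian_mat d H" and sr: "spectral_radius H < 1" and x: "norm2 d x = 1"
  shows "norm2 d (mat_app d H x) \<le> 1"
proof (rule ccontr)
  assume "\<not> ?thesis"
  then have gt: "1 < norm2 d (mat_app d H x)" by simp
  obtain c where c: "\<And>k. norm_bound (H ^\<^sub>m k) c"
    using spectral_radius_jnf_norm_bound_less_1_upper_triangular[OF hermitian_mat_carrier[OF H] sr]
    by auto
  define K where "K = real d * (real d * c\<^sup>2)"
  have bound: "norm2 d (mat_app d H x) ^ (2 ^ j) \<le> K" for j
  proof -
    have "norm2 d (mat_app d H x) ^ (2 ^ j) \<le> norm2 d (mat_app d (H ^\<^sub>m (2 ^ j)) x)"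
      by (rule norm2_mat_app_pow_le[OF H x])
    also have "\<dots> \<le> K * norm2 d x"
      unfolding K_def by (rule norm2_mat_app_le_of_entry_bound)
        (use c hermitian_mat_carrier[OF H] in \<open>auto simp: norm_bound_def\<close>)
    finally show ?thesis using x by simp
  qed
  obtain m where "K < norm2 d (mat_app d H x) ^ m" using real_arch_pow[OF gt] by blast
  also have "\<dots> \<le> norm2 d (mat_app d H x) ^ (2 ^ m)"
    using gt by (intro power_increasing) (auto intro: less_imp_le less_exp)
  also have "\<dots> \<le> K" by (rule bound)
  finally show False by simp
qed

lemma norm2_mat_app_le_of_spectral_radius_lt_1:
  assumes H: "hermitian_mat d H" and sr: "spectral_radius H < 1"
  shows "norm2 d (mat_app d H x) \<le> norm2 d x"
proof (cases "norm2 d x = 0")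
  case True
  then have "norm2 d (mat_app d H x) = 0"
    by (simp add: norm2_eq_0_iff mat_app_def)
  then show ?thesis using True by simp
next
  case False
  define s where "s = sqrt (norm2 d x)"
  have s: "0 < s" "s\<^sup>2 = norm2 d x" using False norm2_nonneg[of d x] unfolding s_def by auto
  define y where "y i = of_real (1 / s) * x i" for i
  have "norm2 d y = 1" unfolding y_def norm2_scale s(2)[symmetric] using s False by (simp add: power_divide)
  then have "norm2 d (mat_app d H y) \<le> 1" by (rule norm2_mat_app_unit_le_1[OF H sr])
  then have "(1 / s)\<^sup>2 * norm2 d (mat_app d H x) \<le> 1"
    unfolding y_def mat_app_scale norm2_scale .
  then have "norm2 d (mat_app d H x) \<le> s\<^sup>2"
    using s by (simp add: field_simps power2_eq_square)
  then show ?thesis using s by simp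
qed

text \<open>Rescale \<open>A\<close> by any \<open>M\<close> exceeding its spectral radius, then let \<open>M\<close> decrease to it.\<close>

lemma norm2_mat_app_le_spectral_radius:
  assumes A: "hermitian_mat d A" and d: "0 < d"
  shows "norm2 d (mat_app d A x) \<le> (spectral_radius A)\<^sup>2 * norm2 d x"
proof (rule le_sq_mult_of_forall_gt)
  have Ac: "A \<in> carrier_mat d d" by (rule hermitian_mat_carrier[OF A])
  have sr_max: "cmod e \<le> spectral_radius A" if "eigenvalue A e" for e
    using spectral_radius_mem_max(2)[OF Ac d] that unfolding spectrum_def by auto
  obtain e0 where "eigenvalue A e0" "spectral_radius A = cmod e0"
    using spectral_radius_mem_max(1)[OF Ac d] unfolding spectrum_def by auto
  then show "0 \<le> spectral_radius A" by simp
  show "0 \<le> norm2 d x" by (rule norm2_nonneg)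
  fix M :: real
  assume M: "spectral_radius A < M"
  then have "0 < M" using \<open>0 \<le> spectral_radius A\<close> by simp
  define A' where "A' = complex_of_real (1 / M) \<cdot>\<^sub>m A"
  have A'c: "A' \<in> carrier_mat d d" using Ac unfolding A'_def by simp
  have A'_entry: "A' $$ (i, j) = complex_of_real (1 / M) * A $$ (i, j)" if "i < d" "j < d" for i j
    using that Ac unfolding A'_def by simp
  have A': "hermitian_mat d A'"
    unfolding hermitian_mat_def by (auto simp: A'_entry A'c hermitian_mat_cnj[OF A])
  have "cmod e < 1" if "eigenvalue A' e" for e
  proof -
    have "eigenvalue A (of_real M * e)"
      using eigenvalue_smult[OF Ac _ that[unfolded A'_def]] \<open>0 < M\<close> by (simp add: mult.commute)
    then have "M * cmod e \<le> spectral_radius A"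
      using sr_max \<open>0 < M\<close> by (fastforce simp: norm_mult)
    then have "M * cmod e < M * 1" using M by simp
    then show ?thesis using \<open>0 < M\<close> by (simp only: mult_less_cancel_left_pos)
  qed
  moreover obtain e where "eigenvalue A' e" "spectral_radius A' = cmod e"
    using spectral_radius_mem_max(1)[OF A'c d] unfolding spectrum_def by auto
  ultimately have "norm2 d (mat_app d A' x) \<le> norm2 d x"
    by (intro norm2_mat_app_le_of_spectral_radius_lt_1[OF A']) simp
  also have "norm2 d (mat_app d A' x) = (1 / M)\<^sup>2 * norm2 d (mat_app d A x)"
    unfolding norm2_scale[symmetric] mat_app_def
    by (rule norm2_cong) (simp add: A'_entry sum_distrib_left algebra_simps)
  finally show "norm2 d (mat_app d A x) \<le> M\<^sup>2 * norm2 d x"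
    using \<open>0 < M\<close> by (simp add: field_simps)
qed

section \<open>Sign-averaged traces of powers\<close>

definition lin_comb_mat :: "nat \<Rightarrow> 'i set \<Rightarrow> ('i \<Rightarrow> complex) \<Rightarrow> ('i \<Rightarrow> complex mat) \<Rightarrow> complex mat" where
  "lin_comb_mat d I c B = mat d d (\<lambda>(i, j). \<Sum>a\<in>I. c a * B a $$ (i, j))"

lemma lin_comb_mat_carrier [simp]: "lin_comb_mat d I c B \<in> carrier_mat d d"
  unfolding lin_comb_mat_def by simp

lemma dim_lin_comb_mat [simp]:
  "dim_row (lin_comb_mat d I c B) = d" "dim_col (lin_comb_mat d I c B) = d"
  unfolding lin_comb_mat_def by simp_all

lemma index_lin_comb_mat:
  "i < d \<Longrightarrow> j < d \<Longrightarrow> lin_comb_mat d I c B $$ (i, j) = (\<Sum>a\<in>I. c a * B a $$ (i, j))"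
  unfolding lin_comb_mat_def by simp

lemma lin_comb_mat_cong:
  "(\<And>a. a \<in> I \<Longrightarrow> c a = c' a) \<Longrightarrow> (\<And>a. a \<in> I \<Longrightarrow> B a = B' a) \<Longrightarrow>
    lin_comb_mat d I c B = lin_comb_mat d I c' B'"
  unfolding lin_comb_mat_def by (auto intro!: cong_mat sum.cong)

lemma lin_comb_mat_reindex:
  assumes "bij_betw h J I"
  shows "lin_comb_mat d I c B = lin_comb_mat d J (\<lambda>b. c (h b)) (\<lambda>b. B (h b))"
proof -
  have "(\<Sum>a\<in>I. f a) = (\<Sum>b\<in>J. f (h b))" for f :: "_ \<Rightarrow> complex"
    by (rule sum.reindex_bij_betw[OF assms, symmetric])
  then show ?thesis unfolding lin_comb_mat_def by simp
qed

lemma lin_comb_mat_mult: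
  assumes B: "\<And>a. a \<in> I \<Longrightarrow> B a \<in> carrier_mat d d" and C: "\<And>b. b \<in> J \<Longrightarrow> C b \<in> carrier_mat d d"
  shows "lin_comb_mat d I c B * lin_comb_mat d J e C
    = lin_comb_mat d (I \<times> J) (\<lambda>(a, b). c a * e b) (\<lambda>(a, b). B a * C b)"
proof (rule eq_matI)
  fix i j
  assume "i < dim_row (lin_comb_mat d (I \<times> J) (\<lambda>(a, b). c a * e b) (\<lambda>(a, b). B a * C b))"
    and "j < dim_col (lin_comb_mat d (I \<times> J) (\<lambda>(a, b). c a * e b) (\<lambda>(a, b). B a * C b))"
  then have ij: "i < d" "j < d" by auto
  have "(lin_comb_mat d I c B * lin_comb_mat d J e C) $$ (i, j)
      = (\<Sum>l<d. (\<Sum>a\<in>I. c a * B a $$ (i, l)) * (\<Sum>b\<in>J. e b * C b $$ (l, j)))"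
    unfolding index_mult_mat_square[OF lin_comb_mat_carrier lin_comb_mat_carrier ij]
    by (intro sum.cong refl) (simp add: index_lin_comb_mat ij)
  also have "\<dots> = (\<Sum>l<d. \<Sum>a\<in>I. \<Sum>b\<in>J. c a * e b * (B a $$ (i, l) * C b $$ (l, j)))"
    by (simp add: sum_product ac_simps)
  also have "\<dots> = (\<Sum>a\<in>I. \<Sum>b\<in>J. \<Sum>l<d. c a * e b * (B a $$ (i, l) * C b $$ (l, j)))"
    by (subst sum.swap) (rule sum.cong[OF refl], rule sum.swap)
  also have "\<dots> = (\<Sum>a\<in>I. \<Sum>b\<in>J. c a * e b * (\<Sum>l<d. B a $$ (i, l) * C b $$ (l, j)))"
    by (simp add: sum_distrib_left)
  also have "\<dots> = (\<Sum>a\<in>I. \<Sum>b\<in>J. c a * e b * (B a * C b) $$ (i, j))"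
  proof -
    have "(B a * C b) $$ (i, j) = (\<Sum>l<d. B a $$ (i, l) * C b $$ (l, j))" if "a \<in> I" "b \<in> J" for a b
      using index_mult_mat_square[OF B[OF that(1)] C[OF that(2)] ij] .
    then show ?thesis by (intro sum.cong refl) (simp only:)
  qed
  also have "\<dots> = lin_comb_mat d (I \<times> J) (\<lambda>(a, b). c a * e b) (\<lambda>(a, b). B a * C b) $$ (i, j)"
    using ij by (simp add: index_lin_comb_mat sum.cartesian_product split_def)
  finally show "(lin_comb_mat d I c B * lin_comb_mat d J e C) $$ (i, j)
      = lin_comb_mat d (I \<times> J) (\<lambda>(a, b). c a * e b) (\<lambda>(a, b). B a * C b) $$ (i, j)" .
qed auto

lemma mat_trace_lin_comb_mat:
  assumes "\<And>a. a \<in> I \<Longrightarrow> B a \<in> carrier_mat d d"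
  shows "mat_trace (lin_comb_mat d I c B) = (\<Sum>a\<in>I. c a * mat_trace (B a))"
proof -
  have "mat_trace (lin_comb_mat d I c B) = (\<Sum>i<d. \<Sum>a\<in>I. c a * B a $$ (i, i))"
    unfolding mat_trace_def by (simp add: index_lin_comb_mat)
  also have "\<dots> = (\<Sum>a\<in>I. c a * (\<Sum>i<d. B a $$ (i, i)))"
    by (subst sum.swap) (simp add: sum_distrib_left)
  also have "\<dots> = (\<Sum>a\<in>I. c a * mat_trace (B a))"
    using assms unfolding mat_trace_def by (intro sum.cong refl) auto
  finally show ?thesis .
qed

lemma mult_lin_comb_mat:
  assumes R: "R \<in> carrier_mat d d" and B: "\<And>a. a \<in> I \<Longrightarrow> B a \<in> carrier_mat d d"
  shows "R * lin_comb_mat d I c B = lin_comb_mat d I c (\<lambda>a. R * B a)"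
proof (rule eq_matI)
  fix i j
  assume "i < dim_row (lin_comb_mat d I c (\<lambda>a. R * B a))" "j < dim_col (lin_comb_mat d I c (\<lambda>a. R * B a))"
  then have ij: "i < d" "j < d" by auto
  have "(R * lin_comb_mat d I c B) $$ (i, j) = (\<Sum>l<d. \<Sum>a\<in>I. c a * (R $$ (i, l) * B a $$ (l, j)))"
    unfolding index_mult_mat_square[OF R lin_comb_mat_carrier ij]
    by (intro sum.cong refl) (simp add: index_lin_comb_mat ij sum_distrib_left algebra_simps)
  also have "\<dots> = lin_comb_mat d I c (\<lambda>a. R * B a) $$ (i, j)"
    using ij R B by (subst sum.swap) (simp add: index_lin_comb_mat index_mult_mat_square sum_distrib_left)
  finally show "(R * lin_comb_mat d I c B) $$ (i, j) = lin_comb_mat d I c (\<lambda>a. R * B a) $$ (i, j)" .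
qed (use R in auto)

lemma mat_trace_mult_lin_comb_mat:
  assumes R: "R \<in> carrier_mat d d" and B: "\<And>a. a \<in> I \<Longrightarrow> B a \<in> carrier_mat d d"
  shows "mat_trace (R * lin_comb_mat d I c B) = (\<Sum>a\<in>I. c a * mat_trace (R * B a))"
proof -
  have "R * lin_comb_mat d I c B = lin_comb_mat d I c (\<lambda>a. R * B a)"
    by (rule mult_lin_comb_mat[OF R]) (rule B)
  then show ?thesis
    by (simp only:) (rule mat_trace_lin_comb_mat, use R B in auto)
qed

lemma hermitian_lin_comb_mat:
  assumes "\<And>a. a \<in> I \<Longrightarrow> cnj (c a) = c a" "\<And>a. a \<in> I \<Longrightarrow> hermitian_mat d (B a)"
  shows "hermitian_mat d (lin_comb_mat d I c B)"
  unfolding hermitian_mat_def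
proof (intro conjI allI impI lin_comb_mat_carrier)
  fix i j
  assume ij: "i < d" "j < d"
  have "cnj (B a $$ (j, i)) = B a $$ (i, j)" if "a \<in> I" for a
    using hermitian_mat_cnj[OF assms(2)[OF that] ij(2,1)] .
  then show "lin_comb_mat d I c B $$ (i, j) = cnj (lin_comb_mat d I c B $$ (j, i))"
    using assms(1) ij by (simp add: index_lin_comb_mat cnj_sum)
qed

definition words :: "nat \<Rightarrow> nat \<Rightarrow> nat list set" where
  "words k q = {w. set w \<subseteq> {..<k} \<and> length w = q}"

definition even_words :: "nat \<Rightarrow> nat \<Rightarrow> nat list set" where
  "even_words k q = {w \<in> words k q. \<forall>a. even (count_list w a)}"

lemma finite_words: "finite (words k q)"
  unfolding words_def by (rule finite_lists_length_eq) simp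

lemma finite_even_words: "finite (even_words k q)"
  unfolding even_words_def using finite_words by simp

lemma bij_betw_Cons_words: "bij_betw (\<lambda>(w, a). a # w) (words k q \<times> {..<k}) (words k (Suc q))"
  unfolding bij_betw_def words_def lists_length_Suc_eq by (auto simp: inj_on_def)

lemma even_words_Suc_Suc_subset:
  "even_words k (Suc (Suc q))
    \<subseteq> (\<lambda>(a, j, u). a # (take j u @ a # drop j u)) ` ({..<k} \<times> {..q} \<times> even_words k q)"
proof
  fix w
  assume w: "w \<in> even_words k (Suc (Suc q))"
  then obtain a w' where w_eq: "w = a # w'" unfolding even_words_def words_def by (cases w) auto
  have even: "even (count_list w b)" for b using w unfolding even_words_def by auto
  then have "odd (count_list w' a)" using even[of a] unfolding w_eq by simp
  then have "a \<in> set w'" by (metis count_list_0_iff even_zero)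
  then obtain ys zs where w'_eq: "w' = ys @ a # zs" using split_list by metis
  define u where "u = ys @ zs"
  have "length w = Suc (Suc q)" "set w \<subseteq> {..<k}" using w unfolding even_words_def words_def by auto
  then have "length u = q" "set u \<subseteq> {..<k}" "a < k" unfolding w_eq w'_eq u_def by auto
  moreover have "even (count_list u b)" for b
    using even[of b] unfolding w_eq w'_eq u_def by (cases "b = a") auto
  ultimately have "u \<in> even_words k q" unfolding even_words_def words_def by auto
  moreover have "w = a # (take (length ys) u @ a # drop (length ys) u)"
    unfolding w_eq w'_eq u_def by simp
  ultimately show "w \<in> (\<lambda>(a, j, u). a # (take j u @ a # drop j u)) ` ({..<k} \<times> {..q} \<times> even_words k q)"
    using \<open>a < k\<close> \<open>length u = q\<close>
    by (intro image_eqI[where x = "(a, length ys, u)"]) (auto simp: u_def)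
qed

lemma card_even_words_le: "card (even_words k (2 * p)) \<le> k ^ p * (2 * p) ^ p"
proof (induction p)
  case 0
  have "even_words k 0 \<subseteq> {[]}" unfolding even_words_def words_def by auto
  then have "card (even_words k 0) \<le> card {[] :: nat list}" by (intro card_mono) auto
  then show ?case by simp
next
  case (Suc p)
  let ?D = "{..<k} \<times> {..2 * p} \<times> even_words k (2 * p)"
  have fin: "finite ?D" by (simp add: finite_even_words)
  let ?insert = "\<lambda>(a, j, u). a # (take j u @ a # drop j u)"
  have "card (even_words k (2 * Suc p)) \<le> card (?insert ` ?D)"
    using even_words_Suc_Suc_subset[of k "2 * p"] fin by (intro card_mono) auto
  also have "\<dots> \<le> card ?D" by (rule card_image_le[OF fin])
  also have "\<dots> = k * (2 * p + 1) * card (even_words k (2 * p))"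
    by (simp add: card_cartesian_product algebra_simps)
  also have "\<dots> \<le> k * (2 * Suc p) * (k ^ p * (2 * Suc p) ^ p)"
  proof (intro mult_le_mono order.refl)
    have "(2 * p) ^ p \<le> (2 * Suc p) ^ p" by (rule power_mono) simp_all
    then show "card (even_words k (2 * p)) \<le> k ^ p * (2 * Suc p) ^ p"
      using Suc.IH by (meson le_trans mult_le_mono2)
  qed simp
  also have "\<dots> = k ^ Suc p * (2 * Suc p) ^ Suc p" by (simp add: algebra_simps)
  finally show ?case .
qed

definition bit_sign :: "bool list \<Rightarrow> nat \<Rightarrow> complex" where
  "bit_sign y a = (if y ! a then 1 else -1)"

lemma card_bool_lists: "card {y :: bool list. length y = k} = 2 ^ k"
  using card_lists_length_eq[of "UNIV :: bool set" k] by simp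

lemma cmod_prod_bit_sign: "cmod (prod_list (map (bit_sign y) w)) = 1"
  by (induction w) (auto simp: bit_sign_def norm_mult)

text \<open>Flipping the bit of a letter occurring an odd number of times is a sign-reversing involution.\<close>

lemma sum_prod_bit_sign_eq_0:
  assumes w: "set w \<subseteq> {..<k}" and odd: "odd (count_list w a)"
  shows "(\<Sum>y | length y = k. prod_list (map (bit_sign y) w)) = 0"
proof -
  have "a \<in> set w" using odd by (metis count_list_0_iff even_zero)
  then have "a < k" using w by auto
  define f where "f y = y[a := \<not> y ! a]" for y :: "bool list"
  have f_length: "length (f y) = length y" for y unfolding f_def by simp
  have f_f: "f (f y) = y" for y unfolding f_def by (cases "a < length y") (simp_all add: list_update_beyond)
  have "prod_list (map (bit_sign (f y)) v) = (-1) ^ count_list v a * prod_list (map (bit_sign y) v)"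
    if "length y = k" for y v
    using that \<open>a < k\<close> by (induction v) (auto simp: f_def bit_sign_def nth_list_update)
  then have "(\<Sum>y | length y = k. prod_list (map (bit_sign y) w))
      = (\<Sum>y | length y = k. - prod_list (map (bit_sign y) w))"
    using odd by (subst sum.reindex_bij_witness[of _ f f]) (auto simp: f_length f_f)
  then show ?thesis by (simp add: sum_negf)
qed

fun word_mat :: "nat \<Rightarrow> (nat \<Rightarrow> complex mat) \<Rightarrow> nat list \<Rightarrow> complex mat" where
  "word_mat d B [] = 1\<^sub>m d"
| "word_mat d B (a # w) = word_mat d B w * B a"

lemma word_mat_carrier:
  assumes "\<And>a. a < k \<Longrightarrow> B a \<in> carrier_mat d d"
  shows "set w \<subseteq> {..<k} \<Longrightarrow> word_mat d B w \<in> carrier_mat d d"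
  by (induction w) (auto intro: mult_carrier_mat assms)

lemma lin_comb_mat_pow:
  assumes B: "\<And>a. a < k \<Longrightarrow> B a \<in> carrier_mat d d"
  shows "lin_comb_mat d {..<k} s B ^\<^sub>m q
    = lin_comb_mat d (words k q) (\<lambda>w. prod_list (map s w)) (word_mat d B)"
proof (induction q)
  case 0
  have "words k 0 = {[]}" unfolding words_def by auto
  then show ?case by (intro eq_matI) (simp_all add: index_lin_comb_mat)
next
  case (Suc q)
  have "lin_comb_mat d {..<k} s B ^\<^sub>m Suc q
      = lin_comb_mat d (words k q) (\<lambda>w. prod_list (map s w)) (word_mat d B) * lin_comb_mat d {..<k} s B"
    using Suc by simp
  also have "\<dots> = lin_comb_mat d (words k q \<times> {..<k}) (\<lambda>(w, a). prod_list (map s w) * s a)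
          (\<lambda>(w, a). word_mat d B w * B a)"
    by (rule lin_comb_mat_mult) (auto simp: B word_mat_carrier[of k B d] words_def)
  also have "\<dots> = lin_comb_mat d (words k q \<times> {..<k})
      (\<lambda>b. prod_list (map s ((\<lambda>(w, a). a # w) b))) (\<lambda>b. word_mat d B ((\<lambda>(w, a). a # w) b))"
    by (rule lin_comb_mat_cong) (auto simp: mult.commute)
  also have "\<dots> = lin_comb_mat d (words k (Suc q)) (\<lambda>w. prod_list (map s w)) (word_mat d B)"
    by (rule lin_comb_mat_reindex[OF bij_betw_Cons_words, symmetric])
  finally show ?case .
qed

lemma norm2_word_mat_le:
  assumes B: "\<And>a. a < k \<Longrightarrow> B a \<in> carrier_mat d d"
    and bound: "\<And>a x. a < k \<Longrightarrow> norm2 d (mat_app d (B a) x) \<le> M\<^sup>2 * norm2 d x"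
    and w: "set w \<subseteq> {..<k}"
  shows "norm2 d (mat_app d (word_mat d B w) x) \<le> (M\<^sup>2) ^ length w * norm2 d x"
  using w
proof (induction w arbitrary: x)
  case Nil
  have "mat_app d (1\<^sub>m d) x i = x i" if "i < d" for i
  proof -
    have "mat_app d (1\<^sub>m d) x i = (\<Sum>j<d. if j = i then x j else 0)"
      unfolding mat_app_def using that by (intro sum.cong refl) auto
    then show ?thesis using that by simp
  qed
  then have "norm2 d (mat_app d (1\<^sub>m d) x) = norm2 d x" by (rule norm2_cong)
  then show ?case by simp
next
  case (Cons a w)
  then have "a < k" "word_mat d B w \<in> carrier_mat d d" using word_mat_carrier[of k B d] B by auto
  then have "norm2 d (mat_app d (word_mat d B (a # w)) x)
      = norm2 d (mat_app d (word_mat d B w) (mat_app d (B a) x))"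
    using B by (intro norm2_cong) (simp add: mat_app_mult)
  also have "\<dots> \<le> (M\<^sup>2) ^ length w * norm2 d (mat_app d (B a) x)" using Cons by simp
  also have "\<dots> \<le> (M\<^sup>2) ^ length w * (M\<^sup>2 * norm2 d x)"
    by (intro mult_left_mono bound \<open>a < k\<close>) simp
  finally show ?case by (simp add: algebra_simps)
qed

lemma cmod_trace_word_mat_le:
  assumes B: "\<And>a. a < k \<Longrightarrow> B a \<in> carrier_mat d d"
    and bound: "\<And>a x. a < k \<Longrightarrow> norm2 d (mat_app d (B a) x) \<le> M\<^sup>2 * norm2 d x"
    and M: "0 \<le> M" and w: "set w \<subseteq> {..<k}"
  shows "cmod (mat_trace (word_mat d B w)) \<le> real d * M ^ length w"
proof -
  let ?P = "word_mat d B w"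
  have diag: "cmod (?P $$ (i, i)) \<le> M ^ length w" if i: "i < d" for i
  proof -
    have col: "mat_app d ?P (basis_fn i) a = ?P $$ (a, i)" for a
      unfolding mat_app_def basis_fn_def using i by (simp add: if_distrib cong: if_cong)
    have "(cmod (?P $$ (i, i)))\<^sup>2 \<le> norm2 d (mat_app d ?P (basis_fn i))"
      unfolding norm2_def col using i by (intro member_le_sum) auto
    also have "\<dots> \<le> (M ^ length w)\<^sup>2"
      using norm2_word_mat_le[OF B bound w, where x = "basis_fn i"] i
      by (simp add: norm2_basis_fn power_mult[symmetric] mult.commute)
    finally show ?thesis by (rule power2_le_imp_le) (simp add: M)
  qed
  have "cmod (mat_trace ?P) \<le> (\<Sum>i<d. cmod (?P $$ (i, i)))"
    unfolding mat_trace_def using word_mat_carrier[of k B d, OF B w] by (simp add: norm_sum)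
  also have "\<dots> \<le> (\<Sum>i<d. M ^ length w)" using diag by (intro sum_mono) auto
  finally show ?thesis by simp
qed

text \<open>Averaging over all sign patterns kills every word with a letter of odd multiplicity.\<close>

lemma sum_trace_signed_pow_le:
  assumes B: "\<And>a. a < k \<Longrightarrow> B a \<in> carrier_mat d d"
    and bound: "\<And>a x. a < k \<Longrightarrow> norm2 d (mat_app d (B a) x) \<le> M\<^sup>2 * norm2 d x"
    and M: "0 \<le> M"
  shows "(\<Sum>y | length y = k. Re (mat_trace (lin_comb_mat d {..<k} (bit_sign y) B ^\<^sub>m q)))
    \<le> 2 ^ k * (real d * M ^ q) * real (card (even_words k q))"
proof -
  let ?C = "2 ^ k * (real d * M ^ q)"
  let ?avg = "\<lambda>w. \<Sum>y | length y = k. prod_list (map (bit_sign y) w)"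
  have tr: "mat_trace (lin_comb_mat d {..<k} (bit_sign y) B ^\<^sub>m q)
      = (\<Sum>w\<in>words k q. prod_list (map (bit_sign y) w) * mat_trace (word_mat d B w))" for y
  proof -
    have "lin_comb_mat d {..<k} (bit_sign y) B ^\<^sub>m q
        = lin_comb_mat d (words k q) (\<lambda>w. prod_list (map (bit_sign y) w)) (word_mat d B)"
      by (rule lin_comb_mat_pow) (rule B)
    then show ?thesis
      by (simp only:) (rule mat_trace_lin_comb_mat, auto simp: words_def intro: word_mat_carrier B)
  qed
  have "(\<Sum>y | length y = k. Re (mat_trace (lin_comb_mat d {..<k} (bit_sign y) B ^\<^sub>m q)))
      = (\<Sum>y | length y = k. \<Sum>w\<in>words k q. Re (prod_list (map (bit_sign y) w) * mat_trace (word_mat d B w)))"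
    unfolding tr Re_sum ..
  also have "\<dots> = (\<Sum>w\<in>words k q. \<Sum>y | length y = k. Re (prod_list (map (bit_sign y) w) * mat_trace (word_mat d B w)))"
    by (rule sum.swap)
  also have "\<dots> = (\<Sum>w\<in>words k q. Re (?avg w * mat_trace (word_mat d B w)))"
    by (simp only: sum_distrib_right Re_sum)
  also have "\<dots> \<le> (\<Sum>w\<in>words k q. if w \<in> even_words k q then ?C else 0)"
  proof (intro sum_mono)
    fix w
    assume w: "w \<in> words k q"
    then have set_w: "set w \<subseteq> {..<k}" and "length w = q" unfolding words_def by auto
    show "Re (?avg w * mat_trace (word_mat d B w)) \<le> (if w \<in> even_words k q then ?C else 0)"
    proof (cases "w \<in> even_words k q")
      case False
      then obtain a where "odd (count_list w a)" using w unfolding even_words_def by auto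
      then show ?thesis using False sum_prod_bit_sign_eq_0[OF set_w] by simp
    next
      case True
      have "cmod (?avg w) \<le> 2 ^ k"
        using norm_sum[of "\<lambda>y. prod_list (map (bit_sign y) w)" "{y. length y = k}"]
        by (simp add: cmod_prod_bit_sign card_bool_lists)
      moreover have "cmod (mat_trace (word_mat d B w)) \<le> d * M ^ q"
        using cmod_trace_word_mat_le[OF B bound M set_w] \<open>length w = q\<close> by simp
      ultimately have "cmod (?avg w * mat_trace (word_mat d B w)) \<le> ?C"
        unfolding norm_mult by (intro mult_mono) auto
      then show ?thesis
        unfolding if_P[OF True] by (rule order_trans[OF complex_Re_le_cmod])
    qed
  qed
  also have "\<dots> = (\<Sum>w\<in>words k q \<inter> even_words k q. ?C)"
    by (rule sum.inter_restrict[OF finite_words, symmetric])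
  also have "words k q \<inter> even_words k q = even_words k q" unfolding even_words_def by auto
  also have "(\<Sum>w\<in>even_words k q. ?C) = ?C * card (even_words k q)" by simp
  finally show ?thesis .
qed

section \<open>Separated families of states\<close>

lemma le_of_pow_le_pow_bound:
  fixes k g M D :: real and p n :: nat
  assumes k: "0 < k" and M: "0 \<le> M" and p: "0 < p" "p \<le> n" and D: "D \<le> 4 ^ p"
    and bound: "(k * g) ^ (2 * p) \<le> D * M ^ (2 * p) * k ^ p * (2 * real p) ^ p"
  shows "k * g\<^sup>2 \<le> 8 * real n * M\<^sup>2"
proof -
  have "k ^ p * (k * g\<^sup>2) ^ p = (k * g) ^ (2 * p)"
    by (simp add: power_mult power_mult_distrib power2_eq_square algebra_simps)
  also have "\<dots> \<le> D * M ^ (2 * p) * k ^ p * (2 * real p) ^ p" by (rule bound)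
  also have "\<dots> \<le> 4 ^ p * M ^ (2 * p) * k ^ p * (2 * real p) ^ p"
    by (intro mult_right_mono D) (simp_all add: M k less_imp_le)
  also have "\<dots> = k ^ p * (4 * M\<^sup>2 * (2 * real p)) ^ p"
    unfolding power_mult_distrib power_mult by (simp only: mult_ac)
  also have "4 * M\<^sup>2 * (2 * real p) = 8 * real p * M\<^sup>2" by simp
  finally have "(k * g\<^sup>2) ^ p \<le> (8 * real p * M\<^sup>2) ^ p" using k by simp
  moreover obtain p' where "p = Suc p'" using p(1) by (cases p) auto
  ultimately have "k * g\<^sup>2 \<le> 8 * real p * M\<^sup>2"
    using power_le_imp_le_base[of "k * g\<^sup>2" p' "8 * real p * M\<^sup>2"] by simp
  also have "\<dots> \<le> 8 * real n * M\<^sup>2" using p(2) by (intro mult_right_mono) auto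
  finally show ?thesis .
qed

locale separated_states =
  fixes k n :: nat and \<rho> :: "bool list \<Rightarrow> complex mat" and Obs :: "nat \<Rightarrow> complex mat"
    and \<alpha> :: "nat \<Rightarrow> real" and \<gamma> :: real
  assumes k_pos: "0 < k" and n_pos: "0 < n"
    and density: "\<And>y. length y = k \<Longrightarrow> density_mat n (\<rho> y)"
    and hermitian: "\<And>i. i < k \<Longrightarrow> hermitian_mat (2 ^ n) (Obs i)"
    and gamma_pos: "0 < \<gamma>"
    and below: "\<And>y i. length y = k \<Longrightarrow> i < k \<Longrightarrow> \<not> y ! i \<Longrightarrow>
      Re (mat_trace (\<rho> y * Obs i)) \<le> \<alpha> i - \<gamma>"
    and above: "\<And>y i. length y = k \<Longrightarrow> i < k \<Longrightarrow> y ! i \<Longrightarrow>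
      \<alpha> i + \<gamma> \<le> Re (mat_trace (\<rho> y * Obs i))"
begin

definition obs_norm :: real where
  "obs_norm = Max {spec_norm (Obs i) | i. i < k}"

abbreviation signed_obs :: "bool list \<Rightarrow> complex mat" where
  "signed_obs y \<equiv> lin_comb_mat (2 ^ n) {..<k} (bit_sign y) Obs"

lemma obs_carrier: "i < k \<Longrightarrow> Obs i \<in> carrier_mat (2 ^ n) (2 ^ n)"
  by (rule hermitian_mat_carrier[OF hermitian])

lemma density_psd: "length y = k \<Longrightarrow> psd_mat (2 ^ n) (\<rho> y)"
  and density_trace: "length y = k \<Longrightarrow> mat_trace (\<rho> y) = 1"
  using density unfolding density_mat_def by auto

lemma spectral_radius_le_obs_norm: "i < k \<Longrightarrow> spectral_radius (Obs i) \<le> obs_norm"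
  unfolding obs_norm_def spec_norm_eq_spectral_radius[symmetric]
  by (rule Max_ge) (auto simp: setcompr_eq_image)

lemma norm2_obs_le:
  assumes "i < k"
  shows "norm2 (2 ^ n) (mat_app (2 ^ n) (Obs i) x) \<le> obs_norm\<^sup>2 * norm2 (2 ^ n) x"
proof -
  obtain e where "eigenvalue (Obs i) e" "spectral_radius (Obs i) = cmod e"
    using spectral_radius_mem_max(1)[OF obs_carrier[OF assms]] unfolding spectrum_def by auto
  then have "0 \<le> spectral_radius (Obs i)" by simp
  with spectral_radius_le_obs_norm[OF assms] have "(spectral_radius (Obs i))\<^sup>2 \<le> obs_norm\<^sup>2"
    by (rule power_mono)
  moreover have "norm2 (2 ^ n) (mat_app (2 ^ n) (Obs i) x)
      \<le> (spectral_radius (Obs i))\<^sup>2 * norm2 (2 ^ n) x"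
    by (rule norm2_mat_app_le_spectral_radius[OF hermitian[OF assms]]) simp
  ultimately show ?thesis
    by (meson mult_right_mono norm2_nonneg order_trans)
qed

lemma obs_norm_nonneg: "0 \<le> obs_norm"
proof -
  obtain e where "eigenvalue (Obs 0) e" "spectral_radius (Obs 0) = cmod e"
    using spectral_radius_mem_max(1)[OF obs_carrier[OF k_pos]] unfolding spectrum_def by auto
  then show ?thesis using spectral_radius_le_obs_norm[OF k_pos] norm_ge_zero[of e] by linarith
qed

text \<open>With the sign prescribed by \<open>y\<close>, each observable separates \<open>\<rho>(y)\<close> from the state of the
  complementary bit string by at least \<open>2\<gamma>\<close>.\<close>

lemma signed_obs_trace_gap:
  assumes y: "length y = k"
  shows "2 * (real k * \<gamma>)
    \<le> Re (mat_trace (\<rho> y * signed_obs y)) - Re (mat_trace (\<rho> (map Not y) * signed_obs y))"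
proof -
  let ?z = "map Not y"
  have z: "length ?z = k" using y by simp
  have gap: "2 * \<gamma>
      \<le> Re (bit_sign y i * mat_trace (\<rho> y * Obs i)) - Re (bit_sign y i * mat_trace (\<rho> ?z * Obs i))"
    if "i < k" for i
    using below[OF y that] above[OF y that] below[OF z that] above[OF z that] y that
    by (cases "y ! i") (auto simp: bit_sign_def)
  have "real k * (2 * \<gamma>) \<le> (\<Sum>i<k. Re (bit_sign y i * mat_trace (\<rho> y * Obs i))
      - Re (bit_sign y i * mat_trace (\<rho> ?z * Obs i)))"
    using sum_mono[of "{..<k}" "\<lambda>_. 2 * \<gamma>"] gap by simp
  also have "\<dots> = Re (mat_trace (\<rho> y * signed_obs y)) - Re (mat_trace (\<rho> ?z * signed_obs y))"
  proof -
    have "mat_trace (\<rho> u * signed_obs y) = (\<Sum>i<k. bit_sign y i * mat_trace (\<rho> u * Obs i))"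
      if "length u = k" for u
      by (rule mat_trace_mult_lin_comb_mat[OF psd_mat_carrier[OF density_psd[OF that]]])
        (simp add: obs_carrier)
    then show ?thesis using y z by (simp add: Re_sum sum_subtractf)
  qed
  finally show ?thesis by simp
qed

lemma trace_signed_obs_pow_ge:
  assumes y: "length y = k"
  shows "(real k * \<gamma>) ^ (2 ^ Suc j) \<le> Re (mat_trace (signed_obs y ^\<^sub>m (2 ^ Suc j)))"
proof -
  let ?z = "map Not y"
  have z: "length ?z = k" using y by simp
  have S: "hermitian_mat (2 ^ n) (signed_obs y)"
    by (rule hermitian_lin_comb_mat) (auto simp: bit_sign_def hermitian)
  have "real k * \<gamma> \<le> cmod (mat_trace (\<rho> y * signed_obs y))
      \<or> real k * \<gamma> \<le> cmod (mat_trace (\<rho> ?z * signed_obs y))"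
    using signed_obs_trace_gap[OF y] complex_Re_le_cmod[of "mat_trace (\<rho> y * signed_obs y)"]
      abs_Re_le_cmod[of "mat_trace (\<rho> ?z * signed_obs y)"] by linarith
  moreover have "0 \<le> real k * \<gamma>" using gamma_pos by simp
  ultimately show ?thesis
    using trace_pow_ge_of_density_trace[OF density_psd[OF y] density_trace[OF y] S]
      trace_pow_ge_of_density_trace[OF density_psd[OF z] density_trace[OF z] S] by blast
qed

theorem separation_bound: "real k * \<gamma>\<^sup>2 \<le> 8 * real n * obs_norm\<^sup>2"
proof -
  obtain j where j: "2 ^ j \<le> n" "n < 2 ^ Suc j" using ex_power_ivl1[of 2 n] n_pos by auto
  define p where "p = (2::nat) ^ j"
  have two_p: "2 ^ Suc j = 2 * p" unfolding p_def by simp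
  have "2 ^ k * (real k * \<gamma>) ^ (2 * p) = (\<Sum>y :: bool list | length y = k. (real k * \<gamma>) ^ (2 * p))"
    by (simp add: card_bool_lists)
  also have "\<dots> \<le> (\<Sum>y | length y = k. Re (mat_trace (signed_obs y ^\<^sub>m (2 * p))))"
    using trace_signed_obs_pow_ge[of _ j] unfolding two_p by (intro sum_mono) auto
  also have "\<dots> \<le> 2 ^ k * (2 ^ n * obs_norm ^ (2 * p)) * real (card (even_words k (2 * p)))"
    using sum_trace_signed_pow_le[OF obs_carrier norm2_obs_le obs_norm_nonneg] by simp
  also have "\<dots> \<le> 2 ^ k * (2 ^ n * obs_norm ^ (2 * p)) * (real k ^ p * (2 * real p) ^ p)"
  proof (rule mult_left_mono)
    have "real (card (even_words k (2 * p))) \<le> real (k ^ p * (2 * p) ^ p)"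
      using card_even_words_le by (rule of_nat_mono)
    then show "real (card (even_words k (2 * p))) \<le> real k ^ p * (2 * real p) ^ p" by simp
  qed (simp add: obs_norm_nonneg)
  finally have "(real k * \<gamma>) ^ (2 * p) \<le> 2 ^ n * obs_norm ^ (2 * p) * real k ^ p * (2 * real p) ^ p"
    by (simp add: mult.assoc)
  moreover have "(2::real) ^ n \<le> 4 ^ p"
  proof -
    have "(2::real) ^ n \<le> 2 ^ (2 * p)" using j unfolding p_def by (intro power_increasing) auto
    also have "\<dots> = 4 ^ p" by (simp add: power_mult)
    finally show ?thesis .
  qed
  ultimately show ?thesis
    using k_pos obs_norm_nonneg j unfolding p_def by (intro le_of_pow_le_pow_bound) auto
qed

end

theorem mainTheorem1:
  "\<exists>c::real. c > 0 \<and>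
    (\<forall>(k::nat) (n::nat) (\<rho>::bool list \<Rightarrow> complex mat) (Obs::nat \<Rightarrow> complex mat)
       (\<alpha>::nat \<Rightarrow> real) (\<gamma>::real).
       0 < n \<longrightarrow> n < k \<longrightarrow>
       (\<forall>y. length y = k \<longrightarrow> density_mat n (\<rho> y)) \<longrightarrow>
       (\<forall>i<k. hermitian_mat (2 ^ n) (Obs i)) \<longrightarrow>
       \<gamma> > 0 \<longrightarrow>
       (\<forall>y i. length y = k \<longrightarrow> i < k \<longrightarrow>
          (\<not> y ! i \<longrightarrow> Re (mat_trace (\<rho> y * Obs i)) \<le> \<alpha> i - \<gamma>) \<and>
          (y ! i \<longrightarrow> Re (mat_trace (\<rho> y * Obs i)) \<ge> \<alpha> i + \<gamma>)) \<longrightarrow>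
       real n * (Max {spec_norm (Obs i) | i. i < k}) ^ 2 / \<gamma> ^ 2 \<ge> c * real k)"
proof (intro exI[of _ "1 / 8"] conjI allI impI)
  fix k n :: nat and \<rho> :: "bool list \<Rightarrow> complex mat" and Obs :: "nat \<Rightarrow> complex mat"
    and \<alpha> :: "nat \<Rightarrow> real" and \<gamma> :: real
  assume "0 < n" "n < k" "\<forall>y. length y = k \<longrightarrow> density_mat n (\<rho> y)"
    "\<forall>i<k. hermitian_mat (2 ^ n) (Obs i)" "\<gamma> > 0"
    "\<forall>y i. length y = k \<longrightarrow> i < k \<longrightarrow>
       (\<not> y ! i \<longrightarrow> Re (mat_trace (\<rho> y * Obs i)) \<le> \<alpha> i - \<gamma>) \<and>
       (y ! i \<longrightarrow> Re (mat_trace (\<rho> y * Obs i)) \<ge> \<alpha> i + \<gamma>)"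
  then interpret separated_states k n \<rho> Obs \<alpha> \<gamma> by unfold_locales auto
  show "real n * (Max {spec_norm (Obs i) | i. i < k}) ^ 2 / \<gamma> ^ 2 \<ge> 1 / 8 * real k"
    using separation_bound gamma_pos by (simp add: obs_norm_def field_simps)
qed simp

end
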